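(* In every playable coalition model $\mathcal{M}$, for every state $w$, coalition $C\subseteq N$ and $\varphi\in\mathcal{L}_{CL}$: if $\mathcal{M},w\models\mathrm{FC}_C(\varphi)$ then $\mathcal{M},w\models\mathrm{FI}_{N\setminus C}(\varphi)$.
   Context: Let $N=\{1,\dots,n\}$ be a finite set of agents and $\mathrm{Prop}$ a countable set of atoms. The language $\mathcal{L}_{CL}$ is $\varphi ::= p \mid \neg\varphi \mid (\varphi\wedge\psi)\mid [C]\varphi$ ($p\in\mathrm{Prop}$, $C\subseteq N$). A coalition model is $\mathcal{M}=(W,E,V)$, $W$ nonempty, $E_w(C)\subseteq\mathcal{P}(W)$ for $w\in W$, $C\subseteq N$, $V:\mathrm{Prop}\to\mathcal{P}(W)$; satisfaction is classical for Boolean parts and $\mathcal{M},w\models[C]\varphi$ iff $[\![\varphi]\!]_{\mathcal{M}}=\{u\mid\mathcal{M},u\models\varphi\}\in E_w(C)$. Write $\overline{X}=W\setminus X$. $E_w$ is playable if for all $C,D\subseteq N$, $X,Y\subseteq W$: (i) $\emptyset\notin E_w(C)$; (ii) $W\in E_w(C)$; (iii) if $X\in E_w(C)$ and $X\subseteq Y$ then $Y\in E_w(C)$; (iv) if $C\cap D=\emptyset$, $X\in E_w(C)$, $Y\in E_w(D)$ then $X\cap Y\in E_w(C\cup D)$; (v) $X\notin E_w(\emptyset)$ iff $\overline{X}\in E_w(N)$. The model is playable if every $E_w$ is. Define $\mathrm{FC}_C(\varphi)=[C]\varphi\wedge[C]\neg\varphi$ and $\mathrm{FI}_C(\varphi)=\neg[C]\varphi\wedge\neg[C]\neg\varphi$.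 *)

theory Defs
  imports Main
begin

datatype fm = Atom nat | Neg fm | Conj fm fm | Box "nat set" fm

text \<open>A coalition model: carrier W, effectivity function E (E w C is E_w(C)), valuation V.\<close>
record 'w cmodel =
  Wd :: "'w set"
  Ef :: "'w \<Rightarrow> nat set \<Rightarrow> 'w set set"
  Vl :: "nat \<Rightarrow> 'w set"

definition agents :: "nat \<Rightarrow> nat set" where
  "agents n = {1..n}"

definition is_cmodel :: "'w cmodel \<Rightarrow> bool" where
  "is_cmodel M \<longleftrightarrow> Wd M \<noteq> {} \<and>
     (\<forall>w\<in>Wd M. \<forall>C. Ef M w C \<subseteq> Pow (Wd M)) \<and> (\<forall>p. Vl M p \<subseteq> Wd M)"

fun sat :: "'w cmodel \<Rightarrow> 'w \<Rightarrow> fm \<Rightarrow> bool" where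
  "sat M w (Atom p) \<longleftrightarrow> w \<in> Vl M p"
| "sat M w (Neg \<phi>) \<longleftrightarrow> \<not> sat M w \<phi>"
| "sat M w (Conj \<phi> \<psi>) \<longleftrightarrow> sat M w \<phi> \<and> sat M w \<psi>"
| "sat M w (Box C \<phi>) \<longleftrightarrow> {u \<in> Wd M. sat M u \<phi>} \<in> Ef M w C"

definition playable_at :: "nat \<Rightarrow> 'w cmodel \<Rightarrow> 'w \<Rightarrow> bool" where
  "playable_at n M w \<longleftrightarrow>
     (\<forall>C\<subseteq>agents n. {} \<notin> Ef M w C) \<and>
     (\<forall>C\<subseteq>agents n. Wd M \<in> Ef M w C) \<and>
     (\<forall>C\<subseteq>agents n. \<forall>X Y. X \<subseteq> Wd M \<longrightarrow> Y \<subseteq> Wd M \<longrightarrow>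
         X \<in> Ef M w C \<longrightarrow> X \<subseteq> Y \<longrightarrow> Y \<in> Ef M w C) \<and>
     (\<forall>C D. C \<subseteq> agents n \<longrightarrow> D \<subseteq> agents n \<longrightarrow> C \<inter> D = {} \<longrightarrow>
         (\<forall>X Y. X \<subseteq> Wd M \<longrightarrow> Y \<subseteq> Wd M \<longrightarrow>
            X \<in> Ef M w C \<longrightarrow> Y \<in> Ef M w D \<longrightarrow> X \<inter> Y \<in> Ef M w (C \<union> D))) \<and>
     (\<forall>X. X \<subseteq> Wd M \<longrightarrow> (X \<notin> Ef M w {} \<longleftrightarrow> Wd M - X \<in> Ef M w (agents n)))"

definition playable :: "nat \<Rightarrow> 'w cmodel \<Rightarrow> bool" where
  "playable n M \<longleftrightarrow> is_cmodel M \<and> (\<forall>w\<in>Wd M. playable_at n M w)"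

definition FC :: "nat set \<Rightarrow> fm \<Rightarrow> fm" where
  "FC C \<phi> = Conj (Box C \<phi>) (Box C (Neg \<phi>))"

definition FI :: "nat set \<Rightarrow> fm \<Rightarrow> fm" where
  "FI C \<phi> = Conj (Neg (Box C \<phi>)) (Neg (Box C (Neg \<phi>)))"

fun wf_fm :: "nat \<Rightarrow> fm \<Rightarrow> bool" where
  "wf_fm n (Atom p) = True"
| "wf_fm n (Neg \<phi>) = wf_fm n \<phi>"
| "wf_fm n (Conj \<phi> \<psi>) = (wf_fm n \<phi> \<and> wf_fm n \<psi>)"
| "wf_fm n (Box C \<phi>) = (C \<subseteq> agents n \<and> wf_fm n \<phi>)"

end

theory Submission
  imports Defs
begin

text \<open>If \<open>C\<close> can force both \<open>\<phi>\<close> and \<open>\<not>\<phi>\<close> and the complementary coalition \<open>N - C\<close>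
  could force one of them, then by superadditivity the grand coalition could force the
  intersection of the truth sets of \<open>\<phi>\<close> and \<open>\<not>\<phi>\<close>, which is empty; playability forbids
  this. Only the conditions (i) and (iv) of playability are needed, and no assumption
  on the shape of \<open>\<phi>\<close>.\<close>

lemma playable_at_disjoint_effective_meet:
  assumes "playable_at n M w"
    and "C \<subseteq> agents n" "D \<subseteq> agents n" "C \<inter> D = {}"
    and "X \<subseteq> Wd M" "Y \<subseteq> Wd M" "X \<in> Ef M w C" "Y \<in> Ef M w D"
  shows "X \<inter> Y \<noteq> {}"
proof -
  have empty_not_eff: "\<forall>C\<subseteq>agents n. {} \<notin> Ef M w C"
    using assms(1) unfolding playable_at_def by (elim conjE)
  have superadditive: "\<forall>C D. C \<subseteq> agents n \<longrightarrow> D \<subseteq> agents n \<longrightarrow> C \<inter> D = {} \<longrightarrow>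
         (\<forall>X Y. X \<subseteq> Wd M \<longrightarrow> Y \<subseteq> Wd M \<longrightarrow>
            X \<in> Ef M w C \<longrightarrow> Y \<in> Ef M w D \<longrightarrow> X \<inter> Y \<in> Ef M w (C \<union> D))"
    using assms(1) unfolding playable_at_def by (elim conjE)
  have "X \<inter> Y \<in> Ef M w (C \<union> D)"
    using superadditive assms(2-8) by simp
  moreover have "C \<union> D \<subseteq> agents n"
    using assms(2,3) by simp
  ultimately show ?thesis
    using empty_not_eff by auto
qed

lemma playable_at_complement_not_effective:
  assumes "playable_at n M w" "C \<subseteq> agents n" "X \<subseteq> Wd M" "X \<in> Ef M w C"
  shows "Wd M - X \<notin> Ef M w (agents n - C)"
  using playable_at_disjoint_effective_meet[OF assms(1,2), of "agents n - C" X "Wd M - X"] assms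
  by blast

lemma sat_Neg_truth_set:
  "{u \<in> Wd M. sat M u (Neg \<phi>)} = Wd M - {u \<in> Wd M. sat M u \<phi>}"
  by auto

theorem mainTheorem3:
  fixes n :: nat and M :: "'w cmodel" and w :: 'w and C :: "nat set" and \<phi> :: fm
  assumes "playable n M"
    and "w \<in> Wd M"
    and "C \<subseteq> agents n"
    and "wf_fm n \<phi>"
    and "sat M w (FC C \<phi>)"
  shows "sat M w (FI (agents n - C) \<phi>)"
proof -
  let ?X = "{u \<in> Wd M. sat M u \<phi>}"
  have playable_w: "playable_at n M w"
    using assms(1,2) unfolding playable_def by blast
  have X_eff: "?X \<in> Ef M w C" and compl_X_eff: "Wd M - ?X \<in> Ef M w C"
    using assms(5) sat_Neg_truth_set[of M \<phi>] by (simp_all add: FC_def)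
  have "Wd M - ?X \<notin> Ef M w (agents n - C)"
    using playable_at_complement_not_effective[OF playable_w assms(3) _ X_eff] by blast
  moreover have "Wd M - (Wd M - ?X) \<notin> Ef M w (agents n - C)"
    using playable_at_complement_not_effective[OF playable_w assms(3) _ compl_X_eff] by blast
  moreover have "Wd M - (Wd M - ?X) = ?X" by blast
  ultimately show ?thesis
    using sat_Neg_truth_set[of M \<phi>] by (simp add: FI_def)
qed

end
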